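(* Let $\mathcal{M}_A$ denote the set of multiway-growth-approximable functions. For every polynomial $p$ with $p\in\mathcal{M}_A$, the set $\mathcal{M}_A$ contains a function asymptotically equal (in the sense of $\Theta$) to $x\mapsto\ln(x)\cdot p(x)$.
   Context: A (string-based) multiway system is a triple $(R,s_{\text{init}},\Sigma)$ with $\Sigma$ a finite alphabet, $R$ a finite set of string replacement rules over $\Sigma$, and $s_{\text{init}}\in\Sigma^*$. Its states graph has as vertices the strings reachable from $s_{\text{init}}$, with an edge $u\to v$ if $v$ arises from $u$ by replacing one occurrence of a rule's left side by its right side. The growth function $g_M(n)$ is the number of states at shortest-path distance $n-1$ from $s_{\text{init}}$. For $h:\mathbb{N}_+\to\mathbb{N}$, $L_{\mathbb{N}}(h):\mathbb{R}_{\ge0}\to\mathbb{R}_{\ge0}$ is the polygonal chain from $(0,0)$ through the points $(n,h(n))$. A function $f:\mathbb{R}_{\ge0}\to\mathbb{R}_{\ge0}$ is multiway-growth-approximable if there is a multiway system $M$ with $f\in\Theta(L_{\mathbb{N}}(g_M))$. *)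

theory Defs
  imports Complex_Main "HOL-Computational_Algebra.Polynomial" "HOL-Library.Landau_Symbols"
begin

record multiway_system =
  mw_rules :: "(nat list \<times> nat list) set"
  mw_init  :: "nat list"
  mw_alph  :: "nat set"

definition wf_multiway :: "multiway_system \<Rightarrow> bool" where
  "wf_multiway M \<longleftrightarrow> finite (mw_alph M) \<and> finite (mw_rules M)
     \<and> (\<forall>(l, r) \<in> mw_rules M. set l \<subseteq> mw_alph M \<and> set r \<subseteq> mw_alph M)
     \<and> set (mw_init M) \<subseteq> mw_alph M"

definition mw_step :: "multiway_system \<Rightarrow> (nat list \<times> nat list) set" where
  "mw_step M = {(u, v). \<exists>(l, r) \<in> mw_rules M. \<exists>x y. u = x @ l @ y \<and> v = x @ r @ y}"

definition mw_at_dist :: "multiway_system \<Rightarrow> nat \<Rightarrow> nat list \<Rightarrow> bool" where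
  "mw_at_dist M k v \<longleftrightarrow> (mw_init M, v) \<in> mw_step M ^^ k
      \<and> (\<forall>j < k. (mw_init M, v) \<notin> mw_step M ^^ j)"

text \<open>Growth function g_M(n) = number of states at distance n-1 (for n \<ge> 1).\<close>
definition growth :: "multiway_system \<Rightarrow> nat \<Rightarrow> nat" where
  "growth M n = card {v. mw_at_dist M (n - 1) v}"

text \<open>Polygonal chain through (0,0) and the points (n, h n), n \<ge> 1.\<close>
definition poly_chain :: "(nat \<Rightarrow> nat) \<Rightarrow> real \<Rightarrow> real" where
  "poly_chain h x =
     (let h' = (\<lambda>n. if n = 0 then 0 else real (h n)); n = nat \<lfloor>x\<rfloor>
      in if x < 0 then 0 else h' n + (x - real n) * (h' (Suc n) - h' n))"

definition multiway_growth_approximable :: "(real \<Rightarrow> real) \<Rightarrow> bool" where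
  "multiway_growth_approximable f \<longleftrightarrow>
     (\<forall>x \<ge> 0. f x \<ge> 0) \<and>
     (\<exists>M. wf_multiway M \<and> f \<in> \<Theta>[at_top](poly_chain (growth M)))"

end

theory Submission
  imports Defs "HOL-Library.Log_Nat" "HOL-Real_Asymp.Real_Asymp"
begin

text \<open>For every d there is one multiway system whose states at distance n number
  \<Theta>(n^d log n). A marker sweeps right and then left over a block of digits, doubling the
  block in each sweep, so round k begins after about 4^k steps. At the turning point of
  every round the marker may instead become d+1 unary counters, each of which can be
  incremented independently. The states at distance n are therefore O(log n) sweep
  positions together with, for each of the \<Theta>(log n) rounds already begun, the weak
  compositions of the remaining time into d+1 parts, of which there are \<Theta>(n^d).
  A nonzero polynomial of degree d is \<Theta>(x^d), which gives the theorem; for p = 0 the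
  hypothesis itself is the witness.\<close>

lemma append_Cons_eq_unique:
  assumes "x @ c # y = x' @ c # y'" "c \<notin> set x'" "c \<notin> set y'"
  shows "x = x' \<and> y = y'"
  by (metis assms append_Cons_eq_iff)

lemma append_Cons_eq_first:
  assumes "a @ c # b = x @ c # y" "c \<notin> set a"
  shows "(x = a \<and> y = b) \<or> (\<exists>x'. x = a @ c # x' \<and> b = x' @ c # y)"
  using assms
proof (induction a arbitrary: x)
  case Nil
  then show ?case by (cases x) auto
next
  case (Cons h a)
  then show ?case by (cases x) auto
qed

lemma append_eq_append_Cons_prefix:
  assumes "P @ w = x @ c # y" "c \<notin> set P"
  shows "\<exists>x'. x = P @ x' \<and> w = x' @ c # y"
  using assms
proof (induction P arbitrary: x)
  case Nil
  then show ?case by auto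
next
  case (Cons h P)
  then show ?case by (cases x) auto
qed

lemma replicate_append_Cons_eq:
  assumes "replicate a x @ y # u = replicate b x @ y # w" "x \<noteq> y"
  shows "a = b \<and> u = w"
  using assms
proof (induction a arbitrary: b)
  case 0
  then show ?case by (cases b) auto
next
  case (Suc a)
  then show ?case by (cases b) auto
qed

lemma count_list_replicate [simp]: "count_list (replicate n x) y = (if x = y then n else 0)"
  by (induction n) auto

section \<open>Unary counters\<close>

definition counter_code :: "nat list \<Rightarrow> nat list" where
  "counter_code ts = concat (map (\<lambda>t. replicate t 7 @ [6]) ts)"

lemma counter_code_simps [simp]:
  "counter_code [] = []"
  "counter_code (t # ts) = replicate t 7 @ 6 # counter_code ts"
  "counter_code (ts @ ts') = counter_code ts @ counter_code ts'"
  by (simp_all add: counter_code_def)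

lemma set_counter_code: "set (counter_code ts) \<subseteq> {6, 7}"
  by (induction ts) auto

lemma counter_code_zeros: "counter_code (replicate n 0) = replicate n 6"
  by (induction n) auto

lemma counter_code_inj: "counter_code ts = counter_code ts' \<Longrightarrow> ts = ts'"
proof (induction ts arbitrary: ts')
  case Nil
  then show ?case by (cases ts') auto
next
  case (Cons t ts)
  then show ?case
    by (cases ts') (auto dest: replicate_append_Cons_eq)
qed

lemma counter_code_increment:
  assumes "j < length ts"
  shows "\<exists>x y. counter_code ts = x @ [6] @ y
    \<and> counter_code (ts[j := Suc (ts ! j)]) = x @ [7, 6] @ y"
proof (intro exI conjI)
  let ?x = "counter_code (take j ts) @ replicate (ts ! j) 7"
  let ?y = "counter_code (drop (Suc j) ts)"
  show "counter_code ts = ?x @ [6] @ ?y"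
    using id_take_nth_drop[OF assms]
    by (metis append.assoc append_Cons append_Nil counter_code_simps(2,3))
  show "counter_code (ts[j := Suc (ts ! j)]) = ?x @ [7, 6] @ ?y"
    using upd_conv_take_nth_drop[OF assms] by (simp add: replicate_append_same[symmetric])
qed

lemma counter_code_split:
  assumes "counter_code ts @ z = x @ 6 # y" "6 \<notin> set z"
  shows "\<exists>j < length ts. x @ 7 # 6 # y = counter_code (ts[j := Suc (ts ! j)]) @ z"
  using assms
proof (induction ts arbitrary: x)
  case Nil
  then show ?case by auto
next
  case (Cons t ts)
  have "replicate t 7 @ 6 # (counter_code ts @ z) = x @ 6 # y"
    using Cons.prems by simp
  moreover have "6 \<notin> set (replicate t (7::nat))"
    by simp
  ultimately have "(x = replicate t 7 \<and> y = counter_code ts @ z)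
      \<or> (\<exists>x'. x = replicate t 7 @ 6 # x' \<and> counter_code ts @ z = x' @ 6 # y)"
    by (rule append_Cons_eq_first)
  then consider (first) "x = replicate t 7" "y = counter_code ts @ z"
    | (later) x' where "x = replicate t 7 @ 6 # x'" "counter_code ts @ z = x' @ 6 # y"
    by blast
  then show ?case
  proof cases
    case first
    then have "x @ 7 # 6 # y = counter_code ((t # ts)[0 := Suc ((t # ts) ! 0)]) @ z"
      by (simp add: replicate_append_same[symmetric])
    then show ?thesis by force
  next
    case (later x')
    from Cons.IH[OF later(2) Cons.prems(2)] obtain j where "j < length ts"
      "x' @ 7 # 6 # y = counter_code (ts[j := Suc (ts ! j)]) @ z" by blast
    then have "x @ 7 # 6 # y = counter_code ((t # ts)[Suc j := Suc ((t # ts) ! Suc j)]) @ z"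
      using later(1) by simp
    then show ?thesis using \<open>j < length ts\<close> by force
  qed
qed

section \<open>The multiway system\<close>

text \<open>Symbols: 0 and 1 delimit the word, 2 and 3 are the digits of the block, 4 and 5 are the
  right- and left-moving markers, and 6 ends a unary counter whose value is the number of 7s
  in front of it. Rule 42 \<rightarrow> 334 doubles the block while the marker moves right, 35 \<rightarrow> 522
  while it moves left.\<close>

definition log_poly_rules :: "nat \<Rightarrow> (nat list \<times> nat list) set" where
  "log_poly_rules d = {([4,2], [3,3,4]), ([4,1], [5,1]), ([3,5], [5,2,2]), ([0,5], [0,4]),
     ([4,1], replicate (Suc d) 6 @ [1]), ([6], [7,6])}"

definition log_poly_system :: "nat \<Rightarrow> multiway_system" where
  "log_poly_system d = \<lparr>mw_rules = log_poly_rules d, mw_init = [0,4,2,1], mw_alph = {0..7}\<rparr>"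

lemma mw_stepI:
  "(l, r) \<in> mw_rules M \<Longrightarrow> u = x @ l @ y \<Longrightarrow> v = x @ r @ y \<Longrightarrow> (u, v) \<in> mw_step M"
  unfolding mw_step_def by blast

lemma mw_rules_log_poly_system [simp]: "mw_rules (log_poly_system d) = log_poly_rules d"
  by (simp add: log_poly_system_def)

lemma wf_log_poly_system: "wf_multiway (log_poly_system d)"
  unfolding wf_multiway_def log_poly_system_def log_poly_rules_def by auto

lemma log_poly_step_cases:
  assumes "(u, v) \<in> mw_step (log_poly_system d)"
  obtains (double_right) x y where "u = x @ [4,2] @ y" "v = x @ [3,3,4] @ y"
    | (turn_left) x y where "u = x @ [4,1] @ y" "v = x @ [5,1] @ y"
    | (double_left) x y where "u = x @ [3,5] @ y" "v = x @ [5,2,2] @ y"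
    | (turn_right) x y where "u = x @ [0,5] @ y" "v = x @ [0,4] @ y"
    | (turn_counters) x y where "u = x @ [4,1] @ y" "v = x @ replicate (Suc d) 6 @ [1] @ y"
    | (increment) x y where "u = x @ [6] @ y" "v = x @ [7,6] @ y"
proof -
  obtain l r x y where "(l, r) \<in> log_poly_rules d" "u = x @ l @ y" "v = x @ r @ y"
    using assms by (auto simp: mw_step_def)
  then show thesis
    unfolding log_poly_rules_def using that by fastforce
qed

definition right_sweep :: "nat \<Rightarrow> nat \<Rightarrow> nat list" where
  "right_sweep k i = 0 # replicate (2*i) 3 @ 4 # replicate (4^k - i) 2 @ [1]"

definition left_sweep :: "nat \<Rightarrow> nat \<Rightarrow> nat list" where
  "left_sweep k j = 0 # replicate (2*4^k - j) 3 @ 5 # replicate (2*j) 2 @ [1]"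

definition counter_word :: "nat \<Rightarrow> nat list \<Rightarrow> nat list" where
  "counter_word k ts = 0 # replicate (2*4^k) 3 @ counter_code ts @ [1]"

text \<open>Round j consists of 4^j right-sweep steps, 2 * 4^j left-sweep steps and two turns, so
  round k starts after 4^k - 1 + 2k steps.\<close>

definition round_start :: "nat \<Rightarrow> nat" where
  "round_start k = 4^k - 1 + 2*k"

abbreviation turn_level :: "nat \<Rightarrow> nat" where
  "turn_level k \<equiv> round_start k + 4^k + 1"

lemma Suc_round_start: "Suc (round_start k) = 4^k + 2*k"
proof -
  have "0 < (4::nat)^k"
    by simp
  then show ?thesis
    unfolding round_start_def by linarith
qed

lemma round_start_Suc: "round_start (Suc k) = turn_level k + 2 * 4^k + 1"
  using Suc_round_start[of k] Suc_round_start[of "Suc k"] by simp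

lemma turn_level_le: "turn_level k \<le> 3 * 4^k"
proof -
  have "2 * k \<le> 4^k"
  proof (induction k)
    case (Suc k)
    have "0 < (4::nat)^k"
      by simp
    then show ?case
      unfolding power_Suc mult_Suc_right using Suc.IH by linarith
  qed simp
  then show ?thesis
    using Suc_round_start[of k] by linarith
qed

lemma marker_symbols:
  "4 \<in> set (right_sweep k i)" "5 \<notin> set (right_sweep k i)" "6 \<notin> set (right_sweep k i)"
  "5 \<in> set (left_sweep k j)" "4 \<notin> set (left_sweep k j)" "6 \<notin> set (left_sweep k j)"
  "4 \<notin> set (counter_word k ts)" "5 \<notin> set (counter_word k ts)"
  using set_counter_code[of ts] by (auto simp: right_sweep_def left_sweep_def counter_word_def)

lemma right_sweep_successor:
  assumes "i \<le> 4^k" "(right_sweep k i, v) \<in> mw_step (log_poly_system d)"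
  shows "(i < 4^k \<and> v = right_sweep k (Suc i))
    \<or> (i = 4^k \<and> (v = left_sweep k 0 \<or> v = counter_word k (replicate (Suc d) 0)))"
proof -
  let ?P = "0 # replicate (2*i) 3"
  let ?Q = "replicate (4^k - i) 2 @ [1]"
  have u: "right_sweep k i = ?P @ 4 # ?Q"
    by (simp add: right_sweep_def)
  have marker: "(4::nat) \<notin> set ?P" "(4::nat) \<notin> set ?Q"
    by auto
  have turn: "x = ?P \<and> i = 4^k \<and> y = []" if "right_sweep k i = x @ [4,1] @ y" for x y
  proof -
    have "x @ 4 # 1 # y = ?P @ 4 # ?Q"
      unfolding u[symmetric] that by simp
    then have "x = ?P \<and> 1 # y = ?Q"
      using marker by (rule append_Cons_eq_unique)
    then show ?thesis
      using assms(1) by (cases "4^k - i") auto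
  qed
  from assms(2) show ?thesis
  proof (cases rule: log_poly_step_cases)
    case (double_right x y)
    have "x @ 4 # 2 # y = ?P @ 4 # ?Q"
      unfolding u[symmetric] double_right(1) by simp
    then have xy: "x = ?P \<and> 2 # y = ?Q"
      using marker by (rule append_Cons_eq_unique)
    then have "i < 4^k"
      by (cases "4^k - i") auto
    moreover have "y = replicate (4^k - Suc i) 2 @ [1]"
      using xy \<open>i < 4^k\<close> by (metis Suc_diff_Suc list.inject replicate_Suc append_Cons)
    ultimately show ?thesis
      using double_right(2) xy by (simp add: right_sweep_def replicate_append_same[symmetric])
  next
    case (turn_left x y)
    then show ?thesis
      using turn[of x y] by (simp add: left_sweep_def)
  next
    case (turn_counters x y)
    then show ?thesis
      using turn[of x y] by (simp add: counter_word_def counter_code_zeros)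
  qed (use marker_symbols(2,3)[where k = k and i = i] in simp_all)
qed

lemma left_sweep_successor:
  assumes "j \<le> 2*4^k" "(left_sweep k j, v) \<in> mw_step (log_poly_system d)"
  shows "(j < 2*4^k \<and> v = left_sweep k (Suc j)) \<or> (j = 2*4^k \<and> v = right_sweep (Suc k) 0)"
proof -
  let ?P = "0 # replicate (2*4^k - j) 3"
  let ?Q = "replicate (2*j) 2 @ [1]"
  have u: "left_sweep k j = ?P @ 5 # ?Q"
    by (simp add: left_sweep_def)
  have marker: "(5::nat) \<notin> set ?P" "(5::nat) \<notin> set ?Q"
    by auto
  from assms(2) show ?thesis
  proof (cases rule: log_poly_step_cases)
    case (double_left x y)
    have "(x @ [3]) @ 5 # y = ?P @ 5 # ?Q"
      unfolding u[symmetric] double_left(1) by simp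
    then have xy: "x @ [3] = ?P \<and> y = ?Q"
      using marker by (rule append_Cons_eq_unique)
    then have "j < 2*4^k"
      by (cases "2*4^k - j") auto
    then have "replicate (2*4^k - j) (3::nat) = replicate (2*4^k - Suc j) 3 @ [3]"
      by (metis Suc_diff_Suc replicate_Suc replicate_append_same)
    then have "x = 0 # replicate (2*4^k - Suc j) 3"
      using xy by (metis append1_eq_conv append_Cons)
    then show ?thesis
      using double_left(2) xy \<open>j < 2*4^k\<close> by (simp add: left_sweep_def)
  next
    case (turn_right x y)
    have "left_sweep k j = [] @ 0 # (replicate (2*4^k - j) 3 @ 5 # ?Q)"
      by (simp add: left_sweep_def)
    then have "x @ 0 # 5 # y = [] @ 0 # (replicate (2*4^k - j) 3 @ 5 # ?Q)"
      unfolding turn_right(1) by simp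
    then have y: "x = []" "5 # y = replicate (2*4^k - j) 3 @ 5 # ?Q"
      using append_Cons_eq_unique[of x 0 "5 # y" "[]"] by auto
    then have "2*4^k - j = 0"
      by (cases "2*4^k - j") auto
    then show ?thesis
      using assms(1) y turn_right(2) by (simp add: right_sweep_def)
  qed (use marker_symbols(5,6)[where k = k and j = j] in simp_all)
qed

lemma counter_word_successor:
  assumes "(counter_word k ts, v) \<in> mw_step (log_poly_system d)"
  shows "\<exists>j < length ts. v = counter_word k (ts[j := Suc (ts ! j)])"
  using assms
proof (cases rule: log_poly_step_cases)
  case (increment x y)
  have "counter_word k ts = (0 # replicate (2*4^k) 3) @ (counter_code ts @ [1])"
    by (simp add: counter_word_def)
  then have "(0 # replicate (2*4^k) 3) @ (counter_code ts @ [1]) = x @ 6 # y"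
    unfolding increment(1) by simp
  then obtain x' where x': "x = (0 # replicate (2*4^k) 3) @ x'" "counter_code ts @ [1] = x' @ 6 # y"
    using append_eq_append_Cons_prefix[of "0 # replicate (2*4^k) 3" _ x 6 y] by auto
  obtain j where "j < length ts" "x' @ 7 # 6 # y = counter_code (ts[j := Suc (ts ! j)]) @ [1]"
    using counter_code_split[OF x'(2)] by auto
  then show ?thesis
    using increment(2) x'(1) by (auto simp: counter_word_def)
qed (use marker_symbols(7,8)[where k = k and ts = ts] in simp_all)

lemma right_sweep_step:
  "i < 4^k \<Longrightarrow> (right_sweep k i, right_sweep k (Suc i)) \<in> mw_step (log_poly_system d)"
proof (rule mw_stepI[of "[4,2]" "[3,3,4]" _ _ "0 # replicate (2*i) 3"
      "replicate (4^k - Suc i) 2 @ [1]"])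
  assume "i < 4^k"
  then have "replicate (4^k - i) (2::nat) = 2 # replicate (4^k - Suc i) 2"
    by (metis Suc_diff_Suc replicate_Suc)
  then show "right_sweep k i = (0 # replicate (2*i) 3) @ [4,2] @ (replicate (4^k - Suc i) 2 @ [1])"
    by (simp add: right_sweep_def)
  show "right_sweep k (Suc i)
      = (0 # replicate (2*i) 3) @ [3,3,4] @ (replicate (4^k - Suc i) 2 @ [1])"
    by (simp add: right_sweep_def replicate_append_same[symmetric])
qed (simp add: log_poly_rules_def)

lemma right_sweep_turn_left:
  "(right_sweep k (4^k), left_sweep k 0) \<in> mw_step (log_poly_system d)"
  by (rule mw_stepI[of "[4,1]" "[5,1]" _ _ "0 # replicate (2*4^k) 3" "[]"])
     (simp_all add: log_poly_rules_def right_sweep_def left_sweep_def)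

lemma right_sweep_turn_counters:
  "(right_sweep k (4^k), counter_word k (replicate (Suc d) 0)) \<in> mw_step (log_poly_system d)"
  by (rule mw_stepI[of "[4,1]" "replicate (Suc d) 6 @ [1]" _ _ "0 # replicate (2*4^k) 3" "[]"])
     (simp_all add: log_poly_rules_def right_sweep_def counter_word_def counter_code_zeros
       del: replicate_Suc)

lemma left_sweep_step:
  "j < 2*4^k \<Longrightarrow> (left_sweep k j, left_sweep k (Suc j)) \<in> mw_step (log_poly_system d)"
proof (rule mw_stepI[of "[3,5]" "[5,2,2]" _ _ "0 # replicate (2*4^k - Suc j) 3"
      "replicate (2*j) 2 @ [1]"])
  assume "j < 2*4^k"
  then have "replicate (2*4^k - j) (3::nat) = replicate (2*4^k - Suc j) 3 @ [3]"
    by (metis Suc_diff_Suc replicate_Suc replicate_append_same)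
  then show "left_sweep k j = (0 # replicate (2*4^k - Suc j) 3) @ [3,5] @ (replicate (2*j) 2 @ [1])"
    by (simp add: left_sweep_def)
qed (simp_all add: log_poly_rules_def left_sweep_def)

lemma left_sweep_turn_right:
  "(left_sweep k (2*4^k), right_sweep (Suc k) 0) \<in> mw_step (log_poly_system d)"
  by (rule mw_stepI[of "[0,5]" "[0,4]" _ _ "[]" "replicate (4*4^k) 2 @ [1]"])
     (simp_all add: log_poly_rules_def right_sweep_def left_sweep_def)

lemma counter_word_step:
  assumes "j < length ts"
  shows "(counter_word k ts, counter_word k (ts[j := Suc (ts ! j)])) \<in> mw_step (log_poly_system d)"
proof -
  obtain x y where "counter_code ts = x @ [6] @ y"
    "counter_code (ts[j := Suc (ts ! j)]) = x @ [7, 6] @ y"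
    using counter_code_increment[OF assms] by blast
  then show ?thesis
    by (intro mw_stepI[of "[6]" "[7,6]" _ _ "0 # replicate (2*4^k) 3 @ x" "y @ [1]"])
       (simp_all add: log_poly_rules_def counter_word_def)
qed

section \<open>The states at a given distance\<close>

definition on_level :: "nat \<Rightarrow> nat list \<Rightarrow> nat \<Rightarrow> bool" where
  "on_level d v n \<longleftrightarrow>
     (\<exists>k i. i \<le> 4^k \<and> v = right_sweep k i \<and> n = round_start k + i) \<or>
     (\<exists>k j. j \<le> 2*4^k \<and> v = left_sweep k j \<and> n = turn_level k + j) \<or>
     (\<exists>k ts. length ts = Suc d \<and> v = counter_word k ts \<and> n = turn_level k + sum_list ts)"

lemma on_levelI:
  "i \<le> 4^k \<Longrightarrow> n = round_start k + i \<Longrightarrow> on_level d (right_sweep k i) n"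
  "j \<le> 2*4^k \<Longrightarrow> n = turn_level k + j \<Longrightarrow> on_level d (left_sweep k j) n"
  "length ts = Suc d \<Longrightarrow> n = turn_level k + sum_list ts \<Longrightarrow> on_level d (counter_word k ts) n"
  unfolding on_level_def by blast+

lemma sum_list_increment:
  "j < length ts \<Longrightarrow> sum_list (ts[j := Suc (ts ! j)]) = Suc (sum_list (ts :: nat list))"
  by (simp add: sum_list_update)

lemma on_level_step:
  assumes "on_level d u n" "(u, v) \<in> mw_step (log_poly_system d)"
  shows "on_level d v (Suc n)"
  using assms(1)[unfolded on_level_def]
proof (elim disjE exE conjE)
  fix k i assume u: "i \<le> 4^k" "u = right_sweep k i" "n = round_start k + i"
  have "(i < 4^k \<and> v = right_sweep k (Suc i))
    \<or> (i = 4^k \<and> (v = left_sweep k 0 \<or> v = counter_word k (replicate (Suc d) 0)))"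
    using right_sweep_successor[OF u(1)] assms(2) u(2) by simp
  then show ?thesis
    using u(3) by (elim disjE conjE) (auto intro: on_levelI)
next
  fix k j assume u: "j \<le> 2*4^k" "u = left_sweep k j" "n = turn_level k + j"
  have "(j < 2*4^k \<and> v = left_sweep k (Suc j)) \<or> (j = 2*4^k \<and> v = right_sweep (Suc k) 0)"
    using left_sweep_successor[OF u(1)] assms(2) u(2) by simp
  then show ?thesis
    using u(3) by (elim disjE conjE) (auto intro: on_levelI simp: round_start_Suc)
next
  fix k ts assume u: "length ts = Suc d" "u = counter_word k ts" "n = turn_level k + sum_list ts"
  then obtain j where "j < length ts" "v = counter_word k (ts[j := Suc (ts ! j)])"
    using counter_word_successor assms(2) by blast
  then show ?thesis
    using u by (auto intro: on_levelI simp: sum_list_increment)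
qed

lemma right_sweep_predecessor:
  assumes "i \<le> 4^k" "Suc n = round_start k + i"
  shows "\<exists>u. on_level d u n \<and> (u, right_sweep k i) \<in> mw_step (log_poly_system d)"
proof (cases i)
  case (Suc i')
  have "on_level d (right_sweep k i') n"
    using assms Suc by (intro on_levelI) auto
  moreover have "(right_sweep k i', right_sweep k i) \<in> mw_step (log_poly_system d)"
    using right_sweep_step[of i' k d] assms(1) Suc by simp
  ultimately show ?thesis
    by blast
next
  case 0
  then obtain k' where k': "k = Suc k'"
    using assms(2) by (cases k) (auto simp: round_start_def)
  have "on_level d (left_sweep k' (2*4^k')) n"
    using assms 0 k' by (intro on_levelI) (auto simp: round_start_Suc)
  moreover have "(left_sweep k' (2*4^k'), right_sweep k i) \<in> mw_step (log_poly_system d)"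
    using left_sweep_turn_right[of k' d] 0 k' by simp
  ultimately show ?thesis
    by blast
qed

lemma left_sweep_predecessor:
  assumes "j \<le> 2*4^k" "Suc n = turn_level k + j"
  shows "\<exists>u. on_level d u n \<and> (u, left_sweep k j) \<in> mw_step (log_poly_system d)"
proof (cases j)
  case (Suc j')
  have "on_level d (left_sweep k j') n"
    using assms Suc by (intro on_levelI) auto
  moreover have "(left_sweep k j', left_sweep k j) \<in> mw_step (log_poly_system d)"
    using left_sweep_step[of j' k d] assms(1) Suc by simp
  ultimately show ?thesis
    by blast
next
  case 0
  have "on_level d (right_sweep k (4^k)) n"
    using assms 0 by (intro on_levelI) auto
  moreover have "(right_sweep k (4^k), left_sweep k j) \<in> mw_step (log_poly_system d)"
    using right_sweep_turn_left[of k d] 0 by simp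
  ultimately show ?thesis
    by blast
qed

lemma counter_word_predecessor:
  assumes "length ts = Suc d" "Suc n = turn_level k + sum_list ts"
  shows "\<exists>u. on_level d u n \<and> (u, counter_word k ts) \<in> mw_step (log_poly_system d)"
proof (cases "sum_list ts = 0")
  case True
  then have "ts = replicate (Suc d) 0"
    using assms(1) by (metis replicate_length_same sum_list_eq_0_iff)
  moreover have "on_level d (right_sweep k (4^k)) n"
    using assms True by (intro on_levelI) auto
  ultimately show ?thesis
    using right_sweep_turn_counters[of k d] by blast
next
  case False
  then obtain j where j: "j < length ts" "ts ! j \<noteq> 0"
    by (metis in_set_conv_nth sum_list_eq_0_iff)
  define ts' where "ts' = ts[j := ts ! j - 1]"
  have ts': "length ts' = Suc d" "j < length ts'" "ts = ts'[j := Suc (ts' ! j)]"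
    using assms(1) j by (auto simp: ts'_def)
  then have "on_level d (counter_word k ts') n"
    using assms(2) sum_list_increment[OF ts'(2)] by (intro on_levelI) auto
  then show ?thesis
    using counter_word_step[OF ts'(2), of k d] ts'(3) by metis
qed

lemma on_level_predecessor:
  assumes "on_level d v (Suc n)"
  shows "\<exists>u. on_level d u n \<and> (u, v) \<in> mw_step (log_poly_system d)"
  using assms[unfolded on_level_def]
proof (elim disjE exE conjE)
  fix k i assume "i \<le> 4^k" "v = right_sweep k i" "Suc n = round_start k + i"
  then show ?thesis
    by (simp add: right_sweep_predecessor)
next
  fix k j assume "j \<le> 2*4^k" "v = left_sweep k j" "Suc n = turn_level k + j"
  then show ?thesis
    by (simp add: left_sweep_predecessor)
next
  fix k ts assume "length ts = Suc d" "v = counter_word k ts" "Suc n = turn_level k + sum_list ts"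
  then show ?thesis
    by (simp add: counter_word_predecessor)
qed

lemma on_level_0: "on_level d v 0 \<longleftrightarrow> v = [0,4,2,1]"
proof
  assume "on_level d v 0"
  moreover have "round_start k = 0 \<longleftrightarrow> k = 0" for k
    by (cases k) (simp_all add: round_start_def)
  ultimately show "v = [0,4,2,1]"
    unfolding on_level_def by (auto simp: right_sweep_def)
next
  assume "v = [0,4,2,1]"
  then show "on_level d v 0"
    using on_levelI(1)[of 0 0 0 d] by (simp add: right_sweep_def round_start_def)
qed

lemma reachable_iff_on_level:
  "(mw_init (log_poly_system d), v) \<in> mw_step (log_poly_system d) ^^ n \<longleftrightarrow> on_level d v n"
proof (induction n arbitrary: v)
  case 0
  then show ?case
    by (auto simp: on_level_0 log_poly_system_def)
next
  case (Suc n)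
  show ?case
  proof
    assume "(mw_init (log_poly_system d), v) \<in> mw_step (log_poly_system d) ^^ Suc n"
    then show "on_level d v (Suc n)"
      using Suc.IH on_level_step by (meson relpow_Suc_E)
  next
    assume "on_level d v (Suc n)"
    then show "(mw_init (log_poly_system d), v) \<in> mw_step (log_poly_system d) ^^ Suc n"
      using Suc.IH by (meson on_level_predecessor relpow_Suc_I)
  qed
qed

lemma right_sweep_inj:
  assumes "right_sweep k i = right_sweep k' i'" "i \<le> 4^k" "i' \<le> 4^k'"
  shows "k = k' \<and> i = i'"
proof -
  have "count_list (right_sweep k i) 3 = 2*i" "count_list (right_sweep k i) 2 = 4^k - i" for k i
    by (simp_all add: right_sweep_def)
  then have "i = i'" "4^k - i = 4^k' - i'"
    using assms(1) by (metis mult_left_cancel zero_neq_numeral)+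
  then have "(4::nat)^k = 4^k'"
    using assms(2,3) by linarith
  then show ?thesis
    using \<open>i = i'\<close> by simp
qed

lemma left_sweep_inj:
  assumes "left_sweep k j = left_sweep k' j'" "j \<le> 2*4^k" "j' \<le> 2*4^k'"
  shows "k = k' \<and> j = j'"
proof -
  have "count_list (left_sweep k j) 2 = 2*j" "count_list (left_sweep k j) 3 = 2*4^k - j" for k j
    by (simp_all add: left_sweep_def)
  then have "j = j'" "2*4^k - j = 2*4^k' - j'"
    using assms(1) by (metis mult_left_cancel zero_neq_numeral)+
  then have "(4::nat)^k = 4^k'"
    using assms(2,3) by linarith
  then show ?thesis
    using \<open>j = j'\<close> by simp
qed

lemma counter_word_inj:
  assumes "counter_word k ts = counter_word k' ts'"
  shows "k = k' \<and> ts = ts'"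
proof -
  have "count_list (counter_word k ts) 3 = 2*4^k" for k ts
    using set_counter_code[of ts] by (auto simp: counter_word_def count_list_0_iff)
  then have "2 * 4^k = (2::nat) * 4^k'"
    using assms by metis
  then have "k = k'"
    by simp
  then show ?thesis
    using assms counter_code_inj by (simp add: counter_word_def)
qed

lemma on_level_unique:
  assumes "on_level d v n" "on_level d v n'"
  shows "n = n'"
  using assms unfolding on_level_def
  by (elim disjE exE conjE)
     (metis marker_symbols right_sweep_inj left_sweep_inj counter_word_inj)+

lemma mw_at_dist_iff_on_level: "mw_at_dist (log_poly_system d) n v \<longleftrightarrow> on_level d v n"
  unfolding mw_at_dist_def reachable_iff_on_level by (auto dest: on_level_unique)

lemma growth_log_poly_system: "growth (log_poly_system d) (Suc n) = card {v. on_level d v n}"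
  by (simp add: growth_def mw_at_dist_iff_on_level)

section \<open>Counting the states at a given distance\<close>

definition weak_compositions :: "nat \<Rightarrow> nat \<Rightarrow> nat list set" where
  "weak_compositions r t = {ts. length ts = r \<and> sum_list ts = t}"

lemma weak_compositions_subset: "weak_compositions r t \<subseteq> {ts. set ts \<subseteq> {0..t} \<and> length ts = r}"
  unfolding weak_compositions_def using member_le_sum_list by fastforce

lemma finite_weak_compositions: "finite (weak_compositions r t)"
  by (rule finite_subset[OF weak_compositions_subset]) (simp add: finite_lists_length_eq)

lemma card_weak_compositions_le: "card (weak_compositions (Suc r) t) \<le> Suc t ^ r"
proof -
  have "inj_on (take r) (weak_compositions (Suc r) t)"
  proof (rule inj_onI)
    fix xs ys
    assume xs: "xs \<in> weak_compositions (Suc r) t" and ys: "ys \<in> weak_compositions (Suc r) t"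
      and eq: "take r xs = take r ys"
    have split: "zs = take r zs @ [zs ! r]" if "length zs = Suc r" for zs :: "nat list"
      using that by (metis lessI take_Suc_conv_app_nth take_all order.refl)
    have "sum_list (take r xs @ [xs ! r]) = sum_list (take r ys @ [ys ! r])"
      using xs ys split by (simp add: weak_compositions_def)
    then have "xs ! r = ys ! r"
      using eq by simp
    then show "xs = ys"
      using xs ys eq split by (metis (mono_tags) mem_Collect_eq weak_compositions_def)
  qed
  moreover have "take r ` weak_compositions (Suc r) t \<subseteq> {xs. set xs \<subseteq> {0..t} \<and> length xs = r}"
    using weak_compositions_subset by (fastforce dest: in_set_takeD)
  ultimately have "card (weak_compositions (Suc r) t) \<le> card {xs. set xs \<subseteq> {0..t} \<and> length xs = r}"
    by (intro card_inj_on_le) (simp_all add: finite_lists_length_eq)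
  then show ?thesis
    by (simp add: card_lists_length_eq)
qed

lemma card_weak_compositions_ge:
  assumes "r * q \<le> t"
  shows "Suc q ^ r \<le> card (weak_compositions (Suc r) t)"
proof -
  let ?X = "{xs. set xs \<subseteq> {0..q} \<and> length xs = r}"
  let ?complete = "\<lambda>xs. xs @ [t - sum_list xs]"
  have "sum_list xs \<le> length xs * q" if "set xs \<subseteq> {0..q}" for xs
    using that by (induction xs) auto
  then have "?complete ` ?X \<subseteq> weak_compositions (Suc r) t"
    using assms by (force simp: weak_compositions_def)
  moreover have "inj_on ?complete ?X"
    by (rule inj_onI) simp
  ultimately have "card ?X \<le> card (weak_compositions (Suc r) t)"
    by (intro card_inj_on_le finite_weak_compositions)
  then show ?thesis
    by (simp add: card_lists_length_eq)
qed

lemma powers_le_eq_lessThan_floorlog: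
  assumes "1 < b"
  shows "{k. b ^ k \<le> n} = {..<floorlog b n}"
proof -
  have "b ^ k \<le> n \<longleftrightarrow> Suc k \<le> floorlog b n" for k
    using floorlog_ge_SucI[OF _ assms] floorlog_geD[of "Suc k" b n] by auto
  then show ?thesis
    by (simp add: set_eq_iff Suc_le_eq)
qed

lemma log_le_floorlog:
  assumes "1 < b" "0 < n"
  shows "log b n \<le> real (floorlog b n)"
proof -
  have "0 \<le> log b n"
    using assms by simp
  then show ?thesis
    using assms by (simp add: floorlog_def) linarith
qed

lemma floorlog_le_log:
  assumes "1 < b" "0 < n"
  shows "real (floorlog b n) \<le> log b n + 1"
proof -
  have "0 \<le> log b n"
    using assms by simp
  then show ?thesis
    using assms by (simp add: floorlog_def)
qed

lemma level_subset:
  "{v. on_level d v m} \<subseteq> (\<lambda>k. right_sweep k (m - round_start k)) ` {k. 4^k \<le> Suc m}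
      \<union> (\<lambda>k. left_sweep k (m - turn_level k)) ` {k. 4^k \<le> Suc m}
      \<union> (\<Union>k\<in>{k. 4^k \<le> Suc m}. counter_word k ` weak_compositions (Suc d) (m - turn_level k))"
    (is "_ \<subseteq> ?R")
proof
  fix v assume "v \<in> {v. on_level d v m}"
  have early: "4^k \<le> Suc m" if "round_start k \<le> m" for k
    using that Suc_round_start[of k] by linarith
  from \<open>v \<in> {v. on_level d v m}\<close> show "v \<in> ?R"
    unfolding on_level_def mem_Collect_eq
  proof (elim disjE exE conjE)
    fix k i assume "i \<le> 4^k" "v = right_sweep k i" "m = round_start k + i"
    then have "k \<in> {k. 4^k \<le> Suc m}" "v = right_sweep k (m - round_start k)"
      using early[of k] by simp_all
    then show ?thesis
      by blast
  next
    fix k j assume "j \<le> 2*4^k" "v = left_sweep k j" "m = turn_level k + j"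
    then have "k \<in> {k. 4^k \<le> Suc m}" "v = left_sweep k (m - turn_level k)"
      using early[of k] by simp_all
    then show ?thesis
      by blast
  next
    fix k ts assume "length ts = Suc d" "v = counter_word k ts" "m = turn_level k + sum_list ts"
    then have "k \<in> {k. 4^k \<le> Suc m}" "ts \<in> weak_compositions (Suc d) (m - turn_level k)"
      using early[of k] by (simp_all add: weak_compositions_def)
    then show ?thesis
      using \<open>v = counter_word k ts\<close> by blast
  qed
qed

lemma counter_words_subset_level:
  assumes "turn_level k \<le> m"
  shows "counter_word k ` weak_compositions (Suc d) (m - turn_level k) \<subseteq> {v. on_level d v m}"
  using assms by (auto simp: weak_compositions_def intro: on_levelI)

lemma card_level_le: "card {v. on_level d v m} \<le> 3 * floorlog 4 (Suc m) * Suc m ^ d"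
proof -
  let ?K = "{k. 4^k \<le> Suc m}"
  let ?C = "\<lambda>k. counter_word k ` weak_compositions (Suc d) (m - turn_level k)"
  have K: "finite ?K" "card ?K = floorlog 4 (Suc m)"
    by (simp_all add: powers_le_eq_lessThan_floorlog)
  have "card (?C k) \<le> Suc m ^ d" for k
  proof -
    have "card (?C k) \<le> Suc (m - turn_level k) ^ d"
      using card_image_le[OF finite_weak_compositions] card_weak_compositions_le order_trans
      by blast
    also have "\<dots> \<le> Suc m ^ d"
      by (intro power_mono) auto
    finally show ?thesis .
  qed
  then have "(\<Sum>k\<in>?K. card (?C k)) \<le> card ?K * Suc m ^ d"
    using sum_bounded_above[of ?K "\<lambda>k. card (?C k)" "Suc m ^ d"] by simp
  then have "card (\<Union>k\<in>?K. ?C k) \<le> card ?K * Suc m ^ d"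
    using card_UN_le[OF K(1), of ?C] by linarith
  moreover have "card ((\<lambda>k. right_sweep k (m - round_start k)) ` ?K) \<le> card ?K"
    "card ((\<lambda>k. left_sweep k (m - turn_level k)) ` ?K) \<le> card ?K"
    by (simp_all add: card_image_le K(1))
  moreover have "card {v. on_level d v m} \<le> card ((\<lambda>k. right_sweep k (m - round_start k)) ` ?K)
      + card ((\<lambda>k. left_sweep k (m - turn_level k)) ` ?K) + card (\<Union>k\<in>?K. ?C k)"
    by (rule order_trans[OF card_mono[OF _ level_subset]])
       (simp_all add: K(1) finite_weak_compositions card_Un_le order_trans[OF card_Un_le])
  moreover have "card ?K \<le> card ?K * Suc m ^ d"
    by simp
  ultimately show ?thesis
    unfolding K(2) by linarith
qed

lemma card_level_ge: "floorlog 4 (m div 8) * Suc (m div (2 * Suc d)) ^ d \<le> card {v. on_level d v m}"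
proof -
  let ?K = "{k. 4^k \<le> m div 8}"
  let ?C = "\<lambda>k. counter_word k ` weak_compositions (Suc d) (m - turn_level k)"
  define q where "q = m div (2 * Suc d)"
  have K: "finite ?K" "card ?K = floorlog 4 (m div 8)"
    by (simp_all add: powers_le_eq_lessThan_floorlog)
  have q: "2 * (d * q) + 2 * q \<le> m"
    using times_div_less_eq_dividend[of "2 * Suc d" m] unfolding q_def by (simp add: algebra_simps)
  \<comment> \<open>The counters of a round k with 8 * 4^k \<le> m have run for more than m/2 steps, so the
    first d of them can take any values up to q, the last one absorbing the rest.\<close>
  have room: "d * q \<le> m - turn_level k \<and> turn_level k \<le> m" if "k \<in> ?K" for k
  proof -
    have "8 * 4^k \<le> m"
      using that less_eq_div_iff_mult_less_eq[of 8 "4^k" m] by simp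
    then show ?thesis
      using turn_level_le[of k] q by linarith
  qed
  have "Suc q ^ d \<le> card (?C k)" if "k \<in> ?K" for k
  proof -
    have "inj_on (counter_word k) (weak_compositions (Suc d) (m - turn_level k))"
      by (rule inj_onI) (simp add: counter_word_inj)
    then show ?thesis
      using card_weak_compositions_ge room[OF that] by (simp add: card_image)
  qed
  then have "card ?K * Suc q ^ d \<le> (\<Sum>k\<in>?K. card (?C k))"
    using sum_bounded_below[of ?K "Suc q ^ d" "\<lambda>k. card (?C k)"] by simp
  also have "\<dots> = card (\<Union>k\<in>?K. ?C k)"
    by (rule card_UN_disjoint[symmetric])
       (auto simp: K(1) finite_weak_compositions dest: counter_word_inj)
  also have "\<dots> \<le> card {v. on_level d v m}"
  proof (rule card_mono)
    show "finite {v. on_level d v m}"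
      by (rule finite_subset[OF level_subset])
         (simp add: powers_le_eq_lessThan_floorlog finite_weak_compositions)
    show "(\<Union>k\<in>?K. ?C k) \<subseteq> {v. on_level d v m}"
      using counter_words_subset_level room by blast
  qed
  finally show ?thesis
    unfolding K(2) q_def .
qed

section \<open>Polygonal chains\<close>

lemma linear_interpolation_bounds:
  fixes a b t :: real
  assumes "0 \<le> t" "t \<le> 1"
  shows "min a b \<le> a + t * (b - a)" "a + t * (b - a) \<le> max a b"
proof -
  have convex: "a + t * (b - a) = (1 - t) * a + t * b"
    by (simp add: algebra_simps)
  have "(1 - t) * min a b + t * min a b \<le> (1 - t) * a + t * b"
    using assms by (intro add_mono mult_left_mono) auto
  then show "min a b \<le> a + t * (b - a)"
    unfolding convex by (simp add: algebra_simps)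
  have "(1 - t) * a + t * b \<le> (1 - t) * max a b + t * max a b"
    using assms by (intro add_mono mult_left_mono) auto
  then show "a + t * (b - a) \<le> max a b"
    unfolding convex by (simp add: algebra_simps)
qed

lemma poly_chain_eq:
  assumes "0 \<le> x"
  shows "poly_chain h x = (if nat \<lfloor>x\<rfloor> = 0 then 0 else real (h (nat \<lfloor>x\<rfloor>)))
    + (x - nat \<lfloor>x\<rfloor>) * (real (h (Suc (nat \<lfloor>x\<rfloor>))) - (if nat \<lfloor>x\<rfloor> = 0 then 0 else real (h (nat \<lfloor>x\<rfloor>))))"
    and "0 \<le> x - nat \<lfloor>x\<rfloor>" "x - nat \<lfloor>x\<rfloor> \<le> 1"
  using assms by (simp_all add: poly_chain_def Let_def) linarith+

lemma poly_chain_nonneg: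
  assumes "0 \<le> x"
  shows "0 \<le> poly_chain h x"
proof -
  let ?n = "nat \<lfloor>x\<rfloor>"
  let ?a = "if ?n = 0 then 0 else real (h ?n)"
  have "min ?a (real (h (Suc ?n))) \<le> poly_chain h x"
    unfolding poly_chain_eq(1)[OF assms]
    by (rule linear_interpolation_bounds(1)[OF poly_chain_eq(2,3)[OF assms]])
  moreover have "0 \<le> min ?a (real (h (Suc ?n)))"
    by simp
  ultimately show ?thesis
    by linarith
qed

lemma poly_chain_between:
  assumes "1 \<le> x"
  shows "min (real (h (nat \<lfloor>x\<rfloor>))) (real (h (Suc (nat \<lfloor>x\<rfloor>)))) \<le> poly_chain h x"
    and "poly_chain h x \<le> max (real (h (nat \<lfloor>x\<rfloor>))) (real (h (Suc (nat \<lfloor>x\<rfloor>))))"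
proof -
  have "0 \<le> x" "nat \<lfloor>x\<rfloor> \<noteq> 0"
    using assms by linarith+
  note chain = poly_chain_eq[OF \<open>0 \<le> x\<close>]
  show "min (real (h (nat \<lfloor>x\<rfloor>))) (real (h (Suc (nat \<lfloor>x\<rfloor>)))) \<le> poly_chain h x"
    using linear_interpolation_bounds(1)[OF chain(2,3)] chain(1)[of h] \<open>nat \<lfloor>x\<rfloor> \<noteq> 0\<close> by simp
  show "poly_chain h x \<le> max (real (h (nat \<lfloor>x\<rfloor>))) (real (h (Suc (nat \<lfloor>x\<rfloor>))))"
    using linear_interpolation_bounds(2)[OF chain(2,3)] chain(1)[of h] \<open>nat \<lfloor>x\<rfloor> \<noteq> 0\<close> by simp
qed

lemma poly_chain_sandwich:
  fixes lo hi :: "real \<Rightarrow> real"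
  assumes "mono_on {real N..} lo" "mono_on {real N..} hi"
    and "\<And>n. N \<le> n \<Longrightarrow> lo (real n) \<le> real (h n)"
    and "\<And>n. N \<le> n \<Longrightarrow> real (h n) \<le> hi (real n)"
    and "real N + 1 \<le> x"
  shows "lo (x - 1) \<le> poly_chain h x" and "poly_chain h x \<le> hi (x + 1)"
proof -
  define n where "n = nat \<lfloor>x\<rfloor>"
  have n: "N < n" "real n \<le> x" "x < real n + 1"
    using assms(5) unfolding n_def by linarith+
  have lower: "lo (x - 1) \<le> real (h k)" if "k \<in> {n, Suc n}" for k
  proof -
    have "lo (x - 1) \<le> lo (real k)"
      using that n assms(5) by (intro mono_onD[OF assms(1)]) auto
    also have "\<dots> \<le> real (h k)"
      using that n by (intro assms(3)) auto
    finally show ?thesis .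
  qed
  have upper: "real (h k) \<le> hi (x + 1)" if "k \<in> {n, Suc n}" for k
  proof -
    have "real (h k) \<le> hi (real k)"
      using that n by (intro assms(4)) auto
    also have "\<dots> \<le> hi (x + 1)"
      using that n assms(5) by (intro mono_onD[OF assms(2)]) auto
    finally show ?thesis .
  qed
  have "1 \<le> x"
    using assms(5) by simp
  show "lo (x - 1) \<le> poly_chain h x"
    using poly_chain_between(1)[OF \<open>1 \<le> x\<close>, of h] lower[of n] lower[of "Suc n"]
    unfolding n_def by simp
  show "poly_chain h x \<le> hi (x + 1)"
    using poly_chain_between(2)[OF \<open>1 \<le> x\<close>, of h] upper[of n] upper[of "Suc n"]
    unfolding n_def by simp
qed

section \<open>Asymptotics\<close>

lemma growth_upper_bound:
  assumes "0 < n"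
  shows "real (growth (log_poly_system d) n) \<le> 3 * (log 4 n + 1) * n ^ d"
proof -
  obtain m where n: "n = Suc m"
    using assms by (cases n) auto
  have "growth (log_poly_system d) n \<le> 3 * floorlog 4 n * n ^ d"
    using card_level_le[of d m] by (simp add: n growth_log_poly_system)
  then have "real (growth (log_poly_system d) n) \<le> 3 * real (floorlog 4 n) * n ^ d"
    by (metis of_nat_le_iff of_nat_mult of_nat_power of_nat_numeral)
  also have "\<dots> \<le> 3 * (log 4 n + 1) * n ^ d"
    using floorlog_le_log[of 4 n] assms by (intro mult_right_mono) auto
  finally show ?thesis .
qed

lemma real_div_le_Suc_div:
  assumes "0 < c"
  shows "real m / real c \<le> real (Suc (m div c))"
proof -
  have "real m = real (m div c) * real c + real (m mod c)"
    by (metis div_mult_mod_eq of_nat_add of_nat_mult)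
  moreover have "real (m mod c) \<le> real c"
    using assms by simp
  ultimately show ?thesis
    using assms by (simp add: pos_divide_le_eq algebra_simps)
qed

lemma growth_lower_bound:
  assumes "17 \<le> n"
  shows "log 4 ((n - 1) / 8 - 1) * ((n - 1) / (2 * Suc d)) ^ d
    \<le> real (growth (log_poly_system d) n)"
proof -
  obtain m where n: "n = Suc m"
    using assms by (cases n) auto
  have "16 \<le> m"
    using assms n by simp
  then have m: "16 \<le> real m"
    by simp
  have "real m / 8 - 1 \<le> real (m div 8)"
    using real_div_le_Suc_div[of 8 m] by simp
  then have "log 4 (real m / 8 - 1) \<le> log 4 (m div 8)"
    using m by simp
  also have "\<dots> \<le> real (floorlog 4 (m div 8))"
    using log_le_floorlog[of 4 "m div 8"] \<open>16 \<le> m\<close> by simp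
  finally have log_bound: "log 4 (real m / 8 - 1) \<le> real (floorlog 4 (m div 8))" .
  have "real m / (2 * Suc d) \<le> real (Suc (m div (2 * Suc d)))"
    using real_div_le_Suc_div[of "2 * Suc d" m] by simp
  then have "log 4 (real m / 8 - 1) * (real m / (2 * Suc d)) ^ d
      \<le> real (floorlog 4 (m div 8)) * real (Suc (m div (2 * Suc d))) ^ d"
    using log_bound m by (intro mult_mono power_mono) auto
  also have "\<dots> \<le> real (growth (log_poly_system d) n)"
    using card_level_ge[of m d] unfolding n growth_log_poly_system
    by (metis of_nat_le_iff of_nat_mult of_nat_power)
  finally show ?thesis
    using n by simp
qed

lemma poly_chain_growth_bounds:
  assumes "18 \<le> x"
  shows "log 4 ((x - 2) / 8 - 1) * ((x - 2) / (2 * real (Suc d))) ^ d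
      \<le> poly_chain (growth (log_poly_system d)) x"
    and "poly_chain (growth (log_poly_system d)) x \<le> 3 * (log 4 (x + 1) + 1) * (x + 1) ^ d"
proof -
  define lo where "lo y = log 4 ((y - 1) / 8 - 1) * ((y - 1) / (2 * real (Suc d))) ^ d" for y
  define hi where "hi y = 3 * (log 4 y + 1) * y ^ d" for y :: real
  have "mono_on {real 17..} lo"
  proof (rule mono_onI)
    fix r s :: real assume "r \<in> {real 17..}" "s \<in> {real 17..}" "r \<le> s"
    then show "lo r \<le> lo s"
      unfolding lo_def by (intro mult_mono power_mono divide_right_mono) auto
  qed
  moreover have "mono_on {real 17..} hi"
  proof (rule mono_onI)
    fix r s :: real assume "r \<in> {real 17..}" "s \<in> {real 17..}" "r \<le> s"
    then show "hi r \<le> hi s"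
      unfolding hi_def by (intro mult_mono power_mono mult_left_mono add_right_mono) auto
  qed
  moreover have "lo (real n) \<le> real (growth (log_poly_system d) n)" if "17 \<le> n" for n
    using growth_lower_bound[OF that] by (simp add: lo_def)
  moreover have "real (growth (log_poly_system d) n) \<le> hi (real n)" if "17 \<le> n" for n
    using growth_upper_bound[of n] that by (simp add: hi_def)
  ultimately have "lo (x - 1) \<le> poly_chain (growth (log_poly_system d)) x"
    "poly_chain (growth (log_poly_system d)) x \<le> hi (x + 1)"
    using poly_chain_sandwich[of 17 lo hi] assms by simp_all
  then show "log 4 ((x - 2) / 8 - 1) * ((x - 2) / (2 * real (Suc d))) ^ d
      \<le> poly_chain (growth (log_poly_system d)) x"
    and "poly_chain (growth (log_poly_system d)) x \<le> 3 * (log 4 (x + 1) + 1) * (x + 1) ^ d"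
    by (simp_all add: lo_def hi_def)
qed

lemma poly_chain_growth_bigtheta:
  "poly_chain (growth (log_poly_system d)) \<in> \<Theta>(\<lambda>x. x ^ d * ln x)"
proof -
  let ?g = "poly_chain (growth (log_poly_system d))"
  define lo where "lo x = log 4 ((x - 2) / 8 - 1) * ((x - 2) / (2 * real (Suc d))) ^ d" for x
  define hi where "hi x = 3 * (log 4 (x + 1) + 1) * (x + 1) ^ d" for x :: real
  have "eventually (\<lambda>x. norm (lo x) \<le> norm (?g x)) at_top"
    using eventually_ge_at_top[of 18]
  proof eventually_elim
    case (elim x)
    then have "0 \<le> lo x"
      by (simp add: lo_def)
    then show ?case
      using poly_chain_growth_bounds(1)[OF elim, where d = d] poly_chain_nonneg[of x] elim
      by (simp add: lo_def)
  qed
  then have "?g \<in> \<Omega>(lo)"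
    by (rule landau_omega.big_mono)
  also have "lo \<in> \<Omega>(\<lambda>x. x ^ d * ln x)"
  proof -
    have "(\<lambda>x. log 4 ((x - 2) / 8 - 1) * ((x - 2) / c) ^ d) \<in> \<Omega>(\<lambda>x. x ^ d * ln x)"
      if "0 < c" for c :: real
      using that by real_asymp
    then show ?thesis
      unfolding lo_def by simp
  qed
  finally have "?g \<in> \<Omega>(\<lambda>x. x ^ d * ln x)" .
  moreover have "eventually (\<lambda>x. norm (?g x) \<le> norm (hi x)) at_top"
    using eventually_ge_at_top[of 18]
  proof eventually_elim
    case (elim x)
    then show ?case
      using poly_chain_growth_bounds(2)[OF elim, where d = d] poly_chain_nonneg[of x] elim
      by (simp add: hi_def)
  qed
  then have "?g \<in> O(hi)"
    by (rule landau_o.big_mono)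
  moreover have "hi \<in> O(\<lambda>x. x ^ d * ln x)"
    unfolding hi_def by real_asymp
  ultimately show ?thesis
    using landau_o.big_trans by blast
qed

lemma poly_bigtheta_power_degree:
  fixes p :: "real poly"
  assumes "p \<noteq> 0"
  shows "(\<lambda>x. poly p x) \<in> \<Theta>(\<lambda>x. x ^ degree p)"
  using assms
  by (intro bigthetaI_tendsto[of "lead_coeff p"]
      tendsto_mono[OF at_top_le_at_infinity poly_divide_tendsto_aux]) simp

theorem mainTheorem10:
  fixes p :: "real poly"
  assumes "multiway_growth_approximable (\<lambda>x. poly p x)"
  shows "\<exists>f. multiway_growth_approximable f \<and> f \<in> \<Theta>[at_top](\<lambda>x. ln x * poly p x)"
proof (cases "p = 0")
  case True
  show ?thesis
  proof (intro exI conjI)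
    show "multiway_growth_approximable (\<lambda>x. poly p x)"
      by (rule assms)
    show "(\<lambda>x. poly p x) \<in> \<Theta>(\<lambda>x. ln x * poly p x)"
      using True by (intro bigthetaI_cong always_eventually) simp
  qed
next
  case False
  let ?f = "poly_chain (growth (log_poly_system (degree p)))"
  show ?thesis
  proof (intro exI conjI)
    show "multiway_growth_approximable ?f"
      unfolding multiway_growth_approximable_def
      by (intro conjI allI impI exI[of _ "log_poly_system (degree p)"] poly_chain_nonneg
          wf_log_poly_system bigtheta_refl)
    have "?f \<in> \<Theta>(\<lambda>x. ln x * x ^ degree p)"
      using poly_chain_growth_bigtheta by (simp add: mult.commute)
    also have "(\<lambda>x. ln x * x ^ degree p) \<in> \<Theta>(\<lambda>x. ln x * poly p x)"
      using poly_bigtheta_power_degree[OF False]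
      by (intro landau_theta.mult_left) (simp add: bigtheta_sym)
    finally show "?f \<in> \<Theta>(\<lambda>x. ln x * poly p x)" .
  qed
qed

end
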